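(* Consider the distributed detection model in the context with $N\ge 2$, and let $m=\frac{N}{2N-2}$. Suppose the fusion center uses the majority rule $K^*=\lceil\frac{N+1}{2}\rceil$ and that $\alpha<\min\{0.5-P_f,\;1-m/P_d\}$. Then for any fixed $P_{1,0}\in[0,1]$, the error probability $P_E$ is a quasi-convex function of $P_{0,1}\in[0,1]$.
   Context: Binary hypothesis test between $H_0$ and $H_1$ with priors $P_0,P_1\in(0,1)$, $P_0+P_1=1$. There are $N$ sensors; conditionally on the hypothesis, their local decisions $v_i\in\{0,1\}$ are i.i.d. with $P(v_i=1\mid H_1)=P_d$, $P(v_i=1\mid H_0)=P_f$, where $0<P_f<P_d<1$. Each sensor independently is Byzantine with probability $\alpha\in[0,1]$. Honest nodes send $u_i=v_i$; a Byzantine node sends $u_i=1$ with probability $P_{1,0}$ when $v_i=0$ and sends $u_i=0$ with probability $P_{0,1}$ when $v_i=1$. Hence conditionally on $H_j$ the $u_i$ are i.i.d. with $P(u_i=1\mid H_0)=\pi_{1,0}=\alpha(P_{1,0}(1-P_f)+(1-P_{0,1})P_f)+(1-\alpha)P_f$ and $P(u_i=1\mid H_1)=\pi_{1,1}=\alpha(P_{1,0}(1-P_d)+(1-P_{0,1})P_d)+(1-\alpha)P_d$. A $K$-out-of-$N$ fusion rule decides $H_1$ iff at least $K$ of the $u_i$ equal $1$; its global false alarm and detection probabilities are $Q_F=\sum_{i=K}^N\binom{N}{i}\pi_{1,0}^i(1-\pi_{1,0})^{N-i}$ and $Q_D=\sum_{i=K}^N\binom{N}{i}\pi_{1,1}^i(1-\pi_{1,1})^{N-i}$,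 and its error probability is $P_E=P_0Q_F+P_1(1-Q_D)$. A function $f$ on an interval is called quasi-convex if there is a point $x^*$ such that $f$ is non-increasing for $x\le x^*$ and non-decreasing for $x\ge x^*$ (this includes $f$ monotone on the whole interval). *)

theory Defs
  imports Complex_Main
begin

text \<open>Probability that a sensor's transmitted bit equals 1 under H0 and H1.\<close>
definition pi10 :: "real \<Rightarrow> real \<Rightarrow> real \<Rightarrow> real \<Rightarrow> real" where
  "pi10 \<alpha> Pf P10 P01 =
     \<alpha> * (P10 * (1 - Pf) + (1 - P01) * Pf) + (1 - \<alpha>) * Pf"

definition pi11 :: "real \<Rightarrow> real \<Rightarrow> real \<Rightarrow> real \<Rightarrow> real" where
  "pi11 \<alpha> Pd P10 P01 =
     \<alpha> * (P10 * (1 - Pd) + (1 - P01) * Pd) + (1 - \<alpha>) * Pd"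

definition tailprob :: "nat \<Rightarrow> nat \<Rightarrow> real \<Rightarrow> real" where
  "tailprob N K p = (\<Sum>i=K..N. real (N choose i) * p ^ i * (1 - p) ^ (N - i))"

definition QF :: "nat \<Rightarrow> nat \<Rightarrow> real \<Rightarrow> real \<Rightarrow> real \<Rightarrow> real \<Rightarrow> real" where
  "QF N K \<alpha> Pf P10 P01 = tailprob N K (pi10 \<alpha> Pf P10 P01)"

definition QD :: "nat \<Rightarrow> nat \<Rightarrow> real \<Rightarrow> real \<Rightarrow> real \<Rightarrow> real \<Rightarrow> real" where
  "QD N K \<alpha> Pd P10 P01 = tailprob N K (pi11 \<alpha> Pd P10 P01)"

definition PE :: "real \<Rightarrow> real \<Rightarrow> nat \<Rightarrow> nat \<Rightarrow> real \<Rightarrow> real \<Rightarrow> real \<Rightarrow> real \<Rightarrow> real \<Rightarrow> real" where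
  "PE P0 P1 N K \<alpha> Pf Pd P10 P01 =
     P0 * QF N K \<alpha> Pf P10 P01 + P1 * (1 - QD N K \<alpha> Pd P10 P01)"

definition quasi_convex_on :: "real set \<Rightarrow> (real \<Rightarrow> real) \<Rightarrow> bool" where
  "quasi_convex_on S f \<longleftrightarrow> (\<exists>xs.
     (\<forall>x\<in>S. \<forall>y\<in>S. x \<le> y \<and> y \<le> xs \<longrightarrow> f y \<le> f x) \<and>
     (\<forall>x\<in>S. \<forall>y\<in>S. xs \<le> x \<and> x \<le> y \<longrightarrow> f x \<le> f y))"

end

theory Submission
  imports Defs "HOL-Analysis.Weierstrass_Theorems"
begin

text \<open>P_E is in fact convex in P_{0,1}. Its derivative is
  \<alpha> N (P1 Pd B(\<pi>_{1,1}) - P0 Pf B(\<pi>_{1,0})), where B is the Bernstein basis polynomial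
  b_{K-1,N-1}, the density of the K-out-of-N tail probability. B increases up to (K-1)/(N-1) and
  decreases after it, and for the majority rule 1/2 \<le> (K-1)/(N-1) \<le> m. Both \<pi>'s decrease in
  P_{0,1}, while the bound on \<alpha> keeps \<pi>_{1,0} below 1/2 and \<pi>_{1,1} above m; hence the
  derivative is nondecreasing. A continuous convex function on a compact interval is
  non-increasing left of a minimiser and non-decreasing right of it.\<close>

lemma has_real_derivative_Bernstein_Suc:
  "(Bernstein n (Suc k) has_real_derivative
      real n * (Bernstein (n - 1) k x - Bernstein (n - 1) (Suc k) x)) (at x)"
proof -
  have choose_k: "real (n choose Suc k) * real (Suc k) = real n * real ((n - 1) choose k)"
    using times_binomial_minus1_eq[of "Suc k" n]
    by (metis of_nat_mult mult.commute zero_less_Suc diff_Suc_1)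
  have choose_Suc_k: "real (n choose Suc k) * real (n - Suc k) = real n * real ((n - 1) choose Suc k)"
    using binomial_absorb_comp[of n "Suc k"] by (metis of_nat_mult mult.commute)
  have "real n * Bernstein (n - 1) k x
          = (real n * real ((n - 1) choose k)) * x ^ k * (1 - x) ^ (n - Suc k)"
    by (simp add: Bernstein_def)
  also have "\<dots> = real (n choose Suc k) * real (Suc k) * x ^ k * (1 - x) ^ (n - Suc k)"
    by (simp only: choose_k)
  finally have left: "real n * Bernstein (n - 1) k x = \<dots>" .
  have "real n * Bernstein (n - 1) (Suc k) x
          = (real n * real ((n - 1) choose Suc k)) * x ^ Suc k * (1 - x) ^ (n - Suc k - 1)"
    by (simp add: Bernstein_def)
  also have "\<dots> = real (n choose Suc k) * real (n - Suc k) * x ^ Suc k * (1 - x) ^ (n - Suc k - 1)"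
    by (simp only: choose_Suc_k)
  finally have right: "real n * Bernstein (n - 1) (Suc k) x = \<dots>" .
  have "(Bernstein n (Suc k) has_real_derivative
          real (n choose Suc k) * real (Suc k) * x ^ k * (1 - x) ^ (n - Suc k)
          - real (n choose Suc k) * real (n - Suc k) * x ^ Suc k * (1 - x) ^ (n - Suc k - 1)) (at x)"
    unfolding Bernstein_def by (rule derivative_eq_intros refl)+ (simp add: algebra_simps)
  then show ?thesis
    by (simp only: right_diff_distrib left right)
qed

lemma has_real_derivative_tailprob:
  assumes "0 < K" "K \<le> N"
  shows "(tailprob N K has_real_derivative real N * Bernstein (N - 1) (K - 1) p) (at p)"
proof -
  define b where "b i = real N * Bernstein (N - 1) i p" for i
  have "tailprob N K = (\<lambda>p. \<Sum>i=K-1..N-1. Bernstein N (Suc i) p)"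
    using sum.shift_bounds_cl_Suc_ivl[of "\<lambda>i. Bernstein N i _" "K - 1" "N - 1"] assms
    by (simp add: fun_eq_iff tailprob_def Bernstein_def)
  moreover have "((\<lambda>p. \<Sum>i=K-1..N-1. Bernstein N (Suc i) p) has_real_derivative
                   (\<Sum>i=K-1..N-1. b i - b (Suc i))) (at p)"
    unfolding b_def right_diff_distrib[symmetric]
    by (rule DERIV_sum, rule has_real_derivative_Bernstein_Suc)
  moreover have "K - 1 \<le> Suc (N - 1)"
    using assms by simp
  then have "(\<Sum>i=K-1..N-1. b i - b (Suc i)) = b (K - 1) - b N"
    using sum_Suc_diff[of "K - 1" "N - 1" b] assms by (simp add: sum_subtractf)
  moreover have "b N = 0"
    using assms by (simp add: b_def Bernstein_def)
  ultimately have "(tailprob N K has_real_derivative b (K - 1)) (at p)"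
    by simp
  then show ?thesis
    by (simp add: b_def)
qed

lemma ln_Bernstein:
  assumes "0 < x" "x < 1" "k \<le> n"
  shows "ln (Bernstein n k x) = ln (n choose k) + k * ln x + (n - k) * ln (1 - x)"
  using assms by (simp add: Bernstein_def ln_mult ln_realpow)

lemma has_real_derivative_ln_Bernstein:
  assumes "0 < x" "x < 1" "k \<le> n"
  shows "((\<lambda>x. ln (Bernstein n k x)) has_real_derivative (k - n * x) / (x * (1 - x))) (at x)"
proof -
  have "((\<lambda>x. ln (n choose k) + k * ln x + (n - k) * ln (1 - x)) has_real_derivative
          k / x - (n - k) / (1 - x)) (at x)"
    using assms by (auto intro!: derivative_eq_intros simp: divide_simps) (simp add: algebra_simps)
  moreover have "k / x - (n - k) / (1 - x) = (k * (1 - x) - (n - k) * x) / (x * (1 - x))"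
    using assms by (simp add: field_simps)
  moreover have "k * (1 - x) - (n - k) * x = k - n * x"
    using assms by (simp add: algebra_simps)
  ultimately have "((\<lambda>x. ln (n choose k) + k * ln x + (n - k) * ln (1 - x)) has_real_derivative
                     (k - n * x) / (x * (1 - x))) (at x)"
    by simp
  then show ?thesis
    by (rule has_field_derivative_transform_within_open[where S = "{0<..<1}"])
       (use assms in \<open>auto simp: ln_Bernstein\<close>)
qed

lemma Bernstein_mono:
  assumes "k \<le> n" "0 < x" "x \<le> y" "y < 1" "real n * y \<le> real k"
  shows "Bernstein n k x \<le> Bernstein n k y"
proof -
  have "ln (Bernstein n k x) \<le> ln (Bernstein n k y)"
  proof (rule DERIV_nonneg_imp_nondecreasing[OF assms(3)])
    fix z assume "x \<le> z" "z \<le> y"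
    then have z: "0 < z" "z < 1" "real n * z \<le> real k"
      using assms mult_left_mono[of z y "real n"] by auto
    then have "0 \<le> (k - n * z) / (z * (1 - z))"
      by (intro divide_nonneg_pos) auto
    with has_real_derivative_ln_Bernstein[OF z(1,2) assms(1)]
    show "\<exists>d. ((\<lambda>x. ln (Bernstein n k x)) has_real_derivative d) (at z) \<and> 0 \<le> d"
      by blast
  qed
  then show ?thesis
    using assms by (simp add: Bernstein_pos)
qed

lemma Bernstein_antimono:
  assumes "k \<le> n" "0 < x" "x \<le> y" "y < 1" "real k \<le> real n * x"
  shows "Bernstein n k y \<le> Bernstein n k x"
proof -
  have "ln (Bernstein n k y) \<le> ln (Bernstein n k x)"
  proof (rule DERIV_nonpos_imp_nonincreasing[OF assms(3)])
    fix z assume "x \<le> z" "z \<le> y"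
    then have z: "0 < z" "z < 1" "real k \<le> real n * z"
      using assms mult_left_mono[of x z "real n"] by auto
    then have "(k - n * z) / (z * (1 - z)) \<le> 0"
      by (intro divide_nonpos_pos) auto
    with has_real_derivative_ln_Bernstein[OF z(1,2) assms(1)]
    show "\<exists>d. ((\<lambda>x. ln (Bernstein n k x)) has_real_derivative d) (at z) \<and> d \<le> 0"
      by blast
  qed
  then show ?thesis
    using assms by (simp add: Bernstein_pos)
qed

lemma pi11_eq_pi10: "pi11 = pi10"
  by (simp add: fun_eq_iff pi10_def pi11_def)

lemma pi10_bounds:
  assumes "0 \<le> \<alpha>" "0 \<le> p" "p \<le> 1" "0 \<le> P10" "P10 \<le> 1" "0 \<le> t" "t \<le> 1"
  shows "(1 - \<alpha>) * p \<le> pi10 \<alpha> p P10 t" "pi10 \<alpha> p P10 t \<le> p + \<alpha> * (1 - p)"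
proof -
  have eq: "pi10 \<alpha> p P10 t = p - \<alpha> * p * t + \<alpha> * P10 * (1 - p)"
    by (simp add: pi10_def algebra_simps)
  have "\<alpha> * p * t \<le> \<alpha> * p" "0 \<le> \<alpha> * p * t"
    using assms by (simp_all add: mult_left_le)
  moreover have "\<alpha> * P10 * (1 - p) \<le> \<alpha> * (1 - p)" "0 \<le> \<alpha> * P10 * (1 - p)"
    using assms by (simp_all add: mult_left_le mult_right_mono)
  ultimately show "(1 - \<alpha>) * p \<le> pi10 \<alpha> p P10 t" "pi10 \<alpha> p P10 t \<le> p + \<alpha> * (1 - p)"
    unfolding eq by (simp_all add: algebra_simps)
qed

lemma pi10_antimono:
  assumes "0 \<le> \<alpha>" "0 \<le> p" "s \<le> t"
  shows "pi10 \<alpha> p P10 t \<le> pi10 \<alpha> p P10 s"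
  using assms mult_left_mono[of s t "\<alpha> * p"] by (simp add: pi10_def algebra_simps)

lemma has_real_derivative_pi10: "(pi10 \<alpha> p P10 has_real_derivative - (\<alpha> * p)) (at t)"
  unfolding pi10_def[abs_def] by (rule derivative_eq_intros refl)+ simp

lemma has_real_derivative_PE:
  assumes "0 < K" "K \<le> N"
  shows "(PE P0 P1 N K \<alpha> Pf Pd P10 has_real_derivative
           \<alpha> * N * (P1 * Pd * Bernstein (N - 1) (K - 1) (pi11 \<alpha> Pd P10 t)
                   - P0 * Pf * Bernstein (N - 1) (K - 1) (pi10 \<alpha> Pf P10 t))) (at t)"
proof -
  note tail = has_real_derivative_tailprob[OF assms]
  have "((\<lambda>t. tailprob N K (pi10 \<alpha> p P10 t)) has_real_derivative
          N * Bernstein (N - 1) (K - 1) (pi10 \<alpha> p P10 t) * - (\<alpha> * p)) (at t)" for p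
    by (rule DERIV_chain2[OF tail has_real_derivative_pi10])
  then show ?thesis
    unfolding PE_def[abs_def] QF_def QD_def pi11_eq_pi10
    by (auto intro!: derivative_eq_intros simp: algebra_simps)
qed

lemma PE_derivative_factor_mono:
  fixes n k :: nat
  assumes "k \<le> n" "real n \<le> 2 * real k" "real k \<le> real n * m"
    and "0 \<le> \<alpha>" "\<alpha> < 1/2 - Pf" "\<alpha> < 1 - m / Pd"
    and "0 < Pf" "Pf < Pd" "Pd < 1" "0 \<le> P10" "P10 \<le> 1" "0 \<le> P0" "0 \<le> P1"
    and "0 \<le> s" "s \<le> t" "t \<le> 1"
  shows "P1 * Pd * Bernstein n k (pi11 \<alpha> Pd P10 s) - P0 * Pf * Bernstein n k (pi10 \<alpha> Pf P10 s)
       \<le> P1 * Pd * Bernstein n k (pi11 \<alpha> Pd P10 t) - P0 * Pf * Bernstein n k (pi10 \<alpha> Pf P10 t)"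
proof -
  let ?x = "pi10 \<alpha> Pf P10" and ?y = "pi10 \<alpha> Pd P10"
  have x_range: "0 < ?x u" "?x u \<le> 1/2" if "0 \<le> u" "u \<le> 1" for u
  proof -
    have "0 < (1 - \<alpha>) * Pf" "\<alpha> * (1 - Pf) \<le> \<alpha>"
      using assms by (simp_all add: mult_left_le)
    then show "0 < ?x u" "?x u \<le> 1/2"
      using pi10_bounds[of \<alpha> Pf P10 u] assms that by linarith+
  qed
  have y_range: "m < ?y u" "0 < ?y u" "?y u < 1" if "0 \<le> u" "u \<le> 1" for u
  proof -
    have "m < (1 - \<alpha>) * Pd" "0 < (1 - \<alpha>) * Pd"
      using assms by (simp_all add: field_simps)
    moreover have "\<alpha> * (1 - Pd) < 1 - Pd"
      using mult_strict_right_mono[of \<alpha> 1 "1 - Pd"] assms by simp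
    ultimately show "m < ?y u" "0 < ?y u" "?y u < 1"
      using pi10_bounds[of \<alpha> Pd P10 u] assms that by linarith+
  qed
  have "real n * ?x s \<le> real n * (1/2)"
    using x_range[of s] assms by (intro mult_left_mono) auto
  then have "Bernstein n k (?x t) \<le> Bernstein n k (?x s)"
    using assms x_range[of t] x_range[of s] pi10_antimono[of \<alpha> Pf s t P10]
    by (intro Bernstein_mono) auto
  moreover have "real n * m \<le> real n * ?y t"
    using y_range[of t] assms by (intro mult_left_mono) auto
  then have "Bernstein n k (?y s) \<le> Bernstein n k (?y t)"
    using assms y_range[of t] y_range[of s] pi10_antimono[of \<alpha> Pd s t P10]
    by (intro Bernstein_antimono) auto
  ultimately show ?thesis
    unfolding pi11_eq_pi10 using assms
    by (smt (verit) mult_left_mono mult_nonneg_nonneg)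
qed

lemma majority_threshold_bounds:
  "N + 1 \<le> 2 * nat \<lceil>(real N + 1) / 2\<rceil>" "2 * nat \<lceil>(real N + 1) / 2\<rceil> \<le> N + 2"
proof -
  define c where "c = \<lceil>(real N + 1) / 2\<rceil>"
  have "(real N + 1) / 2 \<le> of_int c" "of_int c - 1 < (real N + 1) / 2"
    using ceiling_correct[of "(real N + 1) / 2"] unfolding c_def by auto
  then have "real_of_int (int N + 1) \<le> real_of_int (2 * c)" "real_of_int (2 * c) < real_of_int (int N + 3)"
    by simp_all
  then have "int N + 1 \<le> 2 * c" "2 * c < int N + 3"
    by (simp_all only: of_int_le_iff of_int_less_iff)
  then show "N + 1 \<le> 2 * nat c" "2 * nat c \<le> N + 2"
    by linarith+
qed

lemma convex_on_imp_quasi_convex_on: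
  assumes "convex_on S f" "compact S" "continuous_on S f"
  shows "quasi_convex_on S f"
proof (cases "S = {}")
  case True
  then show ?thesis by (simp add: quasi_convex_on_def)
next
  case False
  then obtain xs where xs: "xs \<in> S" "\<And>y. y \<in> S \<Longrightarrow> f xs \<le> f y"
    using continuous_attains_inf[OF assms(2) False assms(3)] by blast
  have between: "f y \<le> f x" if "x \<in> S" "min x xs \<le> y" "y \<le> max x xs" for x y
  proof (cases "x = xs")
    case True
    with that show ?thesis by simp
  next
    case False
    define u where "u = (y - x) / (xs - x)"
    have u: "0 \<le> u" "u \<le> 1"
      using that False by (auto simp: u_def divide_simps min_def max_def split: if_splits)
    have "(1 - u) *\<^sub>R x + u *\<^sub>R xs = x + u * (xs - x)"
      by (simp add: algebra_simps)
    also have "\<dots> = y"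
      using False by (simp add: u_def)
    finally have "f y \<le> (1 - u) * f x + u * f xs"
      using convex_onD[OF assms(1) u that(1) xs(1)] by simp
    also have "\<dots> \<le> (1 - u) * f x + u * f x"
      using xs(2)[OF that(1)] u by (simp add: mult_left_mono)
    finally show ?thesis by (simp add: algebra_simps)
  qed
  show ?thesis
    unfolding quasi_convex_on_def
    by (intro exI[of _ xs]) (auto intro!: between)
qed

theorem lemma3:
  fixes N :: nat and P0 P1 Pf Pd \<alpha> P10 :: real
  assumes "N \<ge> 2"
    and "0 < P0" "P0 < 1" "0 < P1" "P1 < 1" "P0 + P1 = 1"
    and "0 < Pf" "Pf < Pd" "Pd < 1"
    and "0 \<le> \<alpha>" "\<alpha> \<le> 1"
    and "\<alpha> < min (1/2 - Pf) (1 - (real N / (2 * real N - 2)) / Pd)"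
    and "0 \<le> P10" "P10 \<le> 1"
  shows "quasi_convex_on {0..1}
           (\<lambda>P01. PE P0 P1 N (nat \<lceil>(real N + 1) / 2\<rceil>) \<alpha> Pf Pd P10 P01)"
proof -
  define K where "K = nat \<lceil>(real N + 1) / 2\<rceil>"
  define m where "m = real N / (2 * real N - 2)"
  have K: "0 < K" "K \<le> N" "N - 1 \<le> 2 * (K - 1)" "2 * (K - 1) \<le> N"
    using majority_threshold_bounds[of N] assms(1) unfolding K_def by linarith+
  have "real (N - 1) * m = real N / 2"
    using assms(1) by (simp add: m_def field_simps)
  then have K_le_m: "real (K - 1) \<le> real (N - 1) * m"
    using K by linarith
  have K_half: "real (N - 1) \<le> 2 * real (K - 1)"
    using K(3) of_nat_le_iff[of "N - 1" "2 * (K - 1)"] by simp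
  have \<alpha>_bounds: "\<alpha> < 1/2 - Pf" "\<alpha> < 1 - m / Pd"
    using assms(12) unfolding m_def by auto
  define f' where "f' t = \<alpha> * N * (P1 * Pd * Bernstein (N - 1) (K - 1) (pi11 \<alpha> Pd P10 t)
                               - P0 * Pf * Bernstein (N - 1) (K - 1) (pi10 \<alpha> Pf P10 t))" for t
  have deriv: "(PE P0 P1 N K \<alpha> Pf Pd P10 has_real_derivative f' t) (at t)" for t
    unfolding f'_def by (rule has_real_derivative_PE[OF K(1,2)])
  have "f' s \<le> f' t" if "s \<in> {0..1}" "t \<in> {0..1}" "s \<le> t" for s t
    unfolding f'_def using assms K K_le_m K_half \<alpha>_bounds that
    by (intro mult_left_mono PE_derivative_factor_mono[where m = m]) auto
  then have "convex_on {0..1} (PE P0 P1 N K \<alpha> Pf Pd P10)"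
    using deriv by (intro convex_on_realI[where f' = f']) auto
  moreover have "continuous_on {0..1} (PE P0 P1 N K \<alpha> Pf Pd P10)"
    using deriv by (meson DERIV_isCont continuous_at_imp_continuous_on)
  ultimately show ?thesis
    unfolding K_def[symmetric] by (intro convex_on_imp_quasi_convex_on) auto
qed

end
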